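(* Let $n=3$ and let $M$ be a Griffiths positive $2\times 2$ matrix of constant coefficient $(1,1)$-forms on $\mathbb{C}^3$. Let $\Omega=\det(M)$, a real $(2,2)$-form. Define a Hermitian form on $V^{1,0}$ by $Q(\alpha,\beta)=\sqrt{-1}\star(\alpha\wedge\overline{\beta}\wedge\Omega)$. Then $Q$ is positive definite on $V^{1,0}$.
   Context: $V^{p,q}$ is the space of constant coefficient $(p,q)$-forms on $\mathbb{C}^n$. A $(1,1)$-form is Kähler if it equals $\sum_l\frac{\sqrt{-1}}{2}dw_l\wedge d\overline{w_l}$ in some complex linear coordinates. A matrix $M=(\alpha_{i,j})$ of $(1,1)$-forms with $\alpha_{i,j}=\overline{\alpha_{j,i}}$ is Griffiths positive if $\sum_{i,j}\theta_i\alpha_{i,j}\overline{\theta_j}$ is Kähler for all nonzero $\theta$; $\det(M)=\alpha_{1,1}\wedge\alpha_{2,2}-\alpha_{1,2}\wedge\alpha_{2,1}$. $\star:V^{3,3}\to\mathbb{C}$ denotes the Hodge star on top-degree forms: $\eta=\star(\eta)\,\mathrm{Vol}$, where $\mathrm{Vol}=\bigwedge_{l=1}^3\frac{\sqrt{-1}}{2}dz_l\wedge d\overline{z_l}$ for fixed complex linear coordinates $(z_1,z_2,z_3)$ (the sign of $\star$ does not depend on this choice). *)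

theory Defs
  imports Complex_Main
begin

text \<open>The exterior algebra is generated by the six covectors
  e_0,e_1,e_2 = dz_1,dz_2,dz_3 and e_3,e_4,e_5 = d(zbar_1),d(zbar_2),d(zbar_3).
  A form is its coefficient function on index sets S (the coefficient of the
  increasingly ordered monomial e_S).\<close>

type_synonym form = "nat set \<Rightarrow> complex"

definition form_zero :: form where "form_zero = (\<lambda>S. 0)"
definition form_add :: "form \<Rightarrow> form \<Rightarrow> form" where
  "form_add f g = (\<lambda>S. f S + g S)"
definition form_diff :: "form \<Rightarrow> form \<Rightarrow> form" where
  "form_diff f g = (\<lambda>S. f S - g S)"
definition form_smult :: "complex \<Rightarrow> form \<Rightarrow> form" where
  "form_smult c f = (\<lambda>S. c * f S)"
definition form_sum :: "(nat \<Rightarrow> form) \<Rightarrow> nat set \<Rightarrow> form" where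
  "form_sum F I = (\<lambda>S. \<Sum>l\<in>I. F l S)"

definition is_pq :: "nat \<Rightarrow> nat \<Rightarrow> form \<Rightarrow> bool" where
  "is_pq p q f \<longleftrightarrow> (\<forall>S. f S \<noteq> 0 \<longrightarrow>
      S \<subseteq> {..<6} \<and> card (S \<inter> {..<3}) = p \<and> card (S \<inter> {3..<6}) = q)"

definition shuffle_sign :: "nat set \<Rightarrow> nat set \<Rightarrow> complex" where
  "shuffle_sign A B = (-1) ^ card {(a,b). a \<in> A \<and> b \<in> B \<and> b < a}"

definition wedge :: "form \<Rightarrow> form \<Rightarrow> form" where
  "wedge f g = (\<lambda>S. \<Sum>A\<in>Pow S. shuffle_sign A (S - A) * f A * g (S - A))"

definition gen :: "nat \<Rightarrow> form" where
  "gen i = (\<lambda>S. if S = {i} then 1 else 0)"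

definition dz :: "nat \<Rightarrow> form" where "dz j = gen j"
definition dzbar :: "nat \<Rightarrow> form" where "dzbar j = gen (j + 3)"

text \<open>Complex conjugation: antilinear, sends dz_j to d(zbar_j) and back, and is
  multiplicative for the wedge product.  csw swaps the index j with j+3.\<close>
definition csw :: "nat \<Rightarrow> nat" where
  "csw i = (if i < 3 then i + 3 else if i < 6 then i - 3 else i)"

definition conj_form :: "form \<Rightarrow> form" where
  "conj_form f = (\<lambda>T. (-1) ^ card {(a,b). a \<in> csw ` T \<and> b \<in> csw ` T \<and> a < b \<and> csw b < csw a}
                       * cnj (f (csw ` T)))"

definition Vol :: form where
  "Vol = wedge (form_smult (\<i>/2) (wedge (dz 0) (dzbar 0)))
          (wedge (form_smult (\<i>/2) (wedge (dz 1) (dzbar 1)))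
                 (form_smult (\<i>/2) (wedge (dz 2) (dzbar 2))))"

definition star :: "form \<Rightarrow> complex" where
  "star \<eta> = \<eta> {..<6} / Vol {..<6}"

definition kahler :: "form \<Rightarrow> bool" where
  "kahler a \<longleftrightarrow> (\<exists>w :: nat \<Rightarrow> form.
      (\<forall>l<3. is_pq 1 0 (w l)) \<and>
      (\<forall>c :: nat \<Rightarrow> complex. form_sum (\<lambda>l. form_smult (c l) (w l)) {..<3} = form_zero
                            \<longrightarrow> (\<forall>l<3. c l = 0)) \<and>
      a = form_sum (\<lambda>l. form_smult (\<i>/2) (wedge (w l) (conj_form (w l)))) {..<3})"

definition griffiths_positive :: "(nat \<Rightarrow> nat \<Rightarrow> form) \<Rightarrow> bool" where
  "griffiths_positive M \<longleftrightarrow>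
     (\<forall>i<2. \<forall>j<2. M i j = conj_form (M j i)) \<and>
     (\<forall>\<theta> :: nat \<Rightarrow> complex. (\<theta> 0 \<noteq> 0 \<or> \<theta> 1 \<noteq> 0) \<longrightarrow>
        kahler (form_sum (\<lambda>i. form_sum (\<lambda>j. form_smult (\<theta> i * cnj (\<theta> j)) (M i j)) {..<2}) {..<2}))"

definition det2 :: "(nat \<Rightarrow> nat \<Rightarrow> form) \<Rightarrow> form" where
  "det2 M = form_diff (wedge (M 0 0) (M 1 1)) (wedge (M 0 1) (M 1 0))"

definition hermQ :: "form \<Rightarrow> form \<Rightarrow> form \<Rightarrow> complex" where
  "hermQ \<Omega> a b = \<i> * star (wedge (wedge a (conj_form b)) \<Omega>)"

end

(* Identify a real (1,1)-form X with its Hermitian coefficient matrix hmat X.  The top-degree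
   product U wedge X wedge Y is then (i/8) times a trilinear mixed determinant of the three
   matrices, so Q(a, a) = 2 (D(A, H00, H11) - D(A, H01, H10)) with H_ij = hmat M_ij and
   A = (a_p conj a_q) of rank one.  Writing the coefficient vector of a as a cross product u x v,
   the rank-one matrix A only sees the restrictions of the H_ij to the plane span {u, v}; choosing
   v orthogonal to u for H00, the quantity becomes
     a b' + a' b - 2 Re (c conj c') + |d|^2 + |d'|^2,
   where d, d' are the values of H01 at (u, v) and (v, u), and [[a, c], [conj c, b]] and
   [[a', c'], [conj c', b']] are the matrices (H_ij (w, w)) for w = u and w = v.  Griffiths
   positivity says exactly that these two matrices are positive definite, so |c|^2 < a b and
   |c'|^2 < a' b', and then 2 |c c'| < 2 sqrt (a b' a' b) <= a b' + a' b. *)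

theory Submission
  imports Defs "Jordan_Normal_Form.Determinant"
begin

section \<open>The top-degree product of (1,1)-forms\<close>

lemma sum_Pow_insert:
  assumes "x \<notin> A" "finite A"
  shows "(\<Sum>B\<in>Pow (insert x A). F B) = (\<Sum>B\<in>Pow A. F B) + (\<Sum>B\<in>Pow A. F (insert x B))"
proof -
  have "inj_on (insert x) (Pow A)"
    using assms unfolding inj_on_def by auto
  moreover have "Pow A \<inter> insert x ` Pow A = {}"
    using assms by auto
  ultimately show ?thesis
    using assms by (simp add: Pow_insert sum.union_disjoint sum.reindex)
qed

definition num_less :: "nat \<Rightarrow> nat set \<Rightarrow> nat" where
  "num_less a B = card {b\<in>B. b < a}"

lemma num_less_empty: "num_less a {} = 0"
  by (simp add: num_less_def)

lemma num_less_insert: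
  assumes "finite B" "x \<notin> B"
  shows "num_less a (insert x B) = (if x < a then Suc (num_less a B) else num_less a B)"
proof -
  have "{b \<in> insert x B. b < a} = (if x < a then insert x {b\<in>B. b < a} else {b\<in>B. b < a})"
    by auto
  then show ?thesis
    using assms unfolding num_less_def by simp
qed

lemma shuffle_sign_empty: "shuffle_sign {} B = 1"
  by (simp add: shuffle_sign_def)

lemma shuffle_sign_insert:
  assumes "finite A" "finite B" "a \<notin> A"
  shows "shuffle_sign (insert a A) B = (-1) ^ num_less a B * shuffle_sign A B"
proof -
  let ?inv = "\<lambda>A. {(x, y). x \<in> A \<and> y \<in> B \<and> y < x}"
  have split: "?inv (insert a A) = Pair a ` {b\<in>B. b < a} \<union> ?inv A"
    by auto
  have "finite (?inv A)"
    by (rule finite_subset[of _ "A \<times> B"]) (use assms in auto)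
  then have "card (?inv (insert a A)) = num_less a B + card (?inv A)"
    unfolding split num_less_def using assms
    by (subst card_Un_disjoint) (auto simp: card_image inj_on_def)
  then show ?thesis
    unfolding shuffle_sign_def by (simp add: power_add)
qed

lemma lessThan_3_eq: "{..<3::nat} = {0, 1, 2}"
  by auto

lemma lessThan_6_eq: "{..<6::nat} = {0, 1, 2, 3, 4, 5}"
  by auto

(* is_pq with the support condition dropped: only the bidegree matters for wedge products. *)
definition bidegree :: "nat \<Rightarrow> nat \<Rightarrow> form \<Rightarrow> bool" where
  "bidegree p q f \<longleftrightarrow> (\<forall>S. f S \<noteq> 0 \<longrightarrow> card (S \<inter> {..<3}) = p \<and> card (S \<inter> {3..<6}) = q)"

lemma is_pq_imp_bidegree: "is_pq p q f \<Longrightarrow> bidegree p q f"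
  unfolding is_pq_def bidegree_def by blast

lemma bidegree_coeff_eq_0:
  "bidegree p q f \<Longrightarrow> \<not> (card (S \<inter> {..<3}) = p \<and> card (S \<inter> {3..<6}) = q) \<Longrightarrow> f S = 0"
  unfolding bidegree_def by blast

lemma bidegree_wedge:
  assumes f: "bidegree p q f" and g: "bidegree p' q' g"
  shows "bidegree (p + p') (q + q') (wedge f g)"
  unfolding bidegree_def
proof (intro allI impI)
  fix S assume nz: "wedge f g S \<noteq> 0"
  then have "finite (Pow S)"
    unfolding wedge_def by (meson sum.infinite)
  then have fin: "finite S"
    by simp
  from nz have "\<exists>A\<in>Pow S. shuffle_sign A (S - A) * f A * g (S - A) \<noteq> 0"
    unfolding wedge_def by (meson sum.neutral)
  then obtain A where A: "A \<subseteq> S" "f A \<noteq> 0" "g (S - A) \<noteq> 0"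
    by auto
  have card_split: "card (S \<inter> L) = card (A \<inter> L) + card ((S - A) \<inter> L)" for L
  proof -
    have "S \<inter> L = (A \<inter> L) \<union> ((S - A) \<inter> L)" "(A \<inter> L) \<inter> ((S - A) \<inter> L) = {}"
      using A(1) by auto
    moreover have "finite A"
      using A(1) fin by (rule finite_subset)
    ultimately show ?thesis
      using fin by (simp add: card_Un_disjoint)
  qed
  show "card (S \<inter> {..<3}) = p + p' \<and> card (S \<inter> {3..<6}) = q + q'"
    using f A(2) g A(3) unfolding bidegree_def card_split by auto
qed

lemma bidegree_smult: "bidegree p q f \<Longrightarrow> bidegree p q (form_smult c f)"
  unfolding bidegree_def form_smult_def by auto

lemma bidegree_dz: "k < 3 \<Longrightarrow> bidegree 1 0 (dz k)"
  unfolding bidegree_def dz_def gen_def by auto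

lemma bidegree_dzbar: "k < 3 \<Longrightarrow> bidegree 0 1 (dzbar k)"
  unfolding bidegree_def dzbar_def gen_def by auto

lemma csw_csw [simp]: "csw (csw i) = i"
  unfolding csw_def by auto

lemma inj_csw: "inj csw"
  by (metis csw_csw injI)

lemma csw_image_holomorphic: "csw ` {..<3} = {3..<6}"
proof
  show "csw ` {..<3} \<subseteq> {3..<6}"
    by (auto simp: csw_def)
  show "{3..<6} \<subseteq> csw ` {..<3}"
  proof
    fix x :: nat assume "x \<in> {3..<6}"
    then have "x = csw (x - 3)" "x - 3 < 3"
      by (auto simp: csw_def)
    then show "x \<in> csw ` {..<3}"
      by blast
  qed
qed

lemma csw_image_antiholomorphic: "csw ` {3..<6} = {..<3}"
  by (simp flip: csw_image_holomorphic add: image_image)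

lemma bidegree_conj_form:
  assumes f: "bidegree p q f"
  shows "bidegree q p (conj_form f)"
  unfolding bidegree_def
proof (intro allI impI)
  fix T assume "conj_form f T \<noteq> 0"
  then have "f (csw ` T) \<noteq> 0"
    unfolding conj_form_def by auto
  then have "card (csw ` T \<inter> {..<3}) = p" "card (csw ` T \<inter> {3..<6}) = q"
    using f unfolding bidegree_def by auto
  moreover have "card (csw ` T \<inter> csw ` S) = card (T \<inter> S)" for S
    by (metis image_Int[OF inj_csw] card_image inj_on_subset[OF inj_csw subset_UNIV])
  ultimately show "card (T \<inter> {..<3}) = q \<and> card (T \<inter> {3..<6}) = p"
    by (metis csw_image_holomorphic csw_image_antiholomorphic)
qed

definition other_lo :: "nat \<Rightarrow> nat" where
  "other_lo x = (if x = 0 then 1 else 0)"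

definition other_hi :: "nat \<Rightarrow> nat" where
  "other_hi x = (if x = 2 then 1 else 2)"

definition mixed_minor ::
    "(nat \<Rightarrow> nat \<Rightarrow> complex) \<Rightarrow> (nat \<Rightarrow> nat \<Rightarrow> complex) \<Rightarrow> nat \<Rightarrow> nat \<Rightarrow> complex" where
  "mixed_minor X Y x y =
     X (other_lo x) (other_lo y) * Y (other_hi x) (other_hi y)
   + X (other_hi x) (other_hi y) * Y (other_lo x) (other_lo y)
   - X (other_lo x) (other_hi y) * Y (other_hi x) (other_lo y)
   - X (other_hi x) (other_lo y) * Y (other_lo x) (other_hi y)"

(* Laplace expansion with polarised 2x2 minors: mixed_det X X X = 2 * det X. *)
definition mixed_det :: "(nat \<Rightarrow> nat \<Rightarrow> complex) \<Rightarrow> (nat \<Rightarrow> nat \<Rightarrow> complex) \<Rightarrow>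
    (nat \<Rightarrow> nat \<Rightarrow> complex) \<Rightarrow> complex" where
  "mixed_det U X Y = (\<Sum>x<3. \<Sum>y<3. (-1) ^ (x + y) * U x y * mixed_minor X Y x y)"

(* A real (1,1)-form is X = (i/2) sum hmat X p q dz_p wedge dzbar_q, with hmat X Hermitian. *)
definition hmat :: "form \<Rightarrow> nat \<Rightarrow> nat \<Rightarrow> complex" where
  "hmat X p q = -2 * \<i> * X {p, q + 3}"

lemma mixed_det_cong:
  assumes "\<And>p q. p < 3 \<Longrightarrow> q < 3 \<Longrightarrow> U p q = U' p q"
    and "\<And>p q. p < 3 \<Longrightarrow> q < 3 \<Longrightarrow> X p q = X' p q"
    and "\<And>p q. p < 3 \<Longrightarrow> q < 3 \<Longrightarrow> Y p q = Y' p q"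
  shows "mixed_det U X Y = mixed_det U' X' Y'"
  unfolding mixed_det_def mixed_minor_def
  by (intro sum.cong refl) (simp add: assms other_lo_def other_hi_def)

lemma mixed_det_scale:
  "mixed_det (\<lambda>p q. a * U p q) (\<lambda>p q. b * X p q) (\<lambda>p q. c * Y p q) = a * b * c * mixed_det U X Y"
  unfolding mixed_det_def mixed_minor_def by (simp add: sum_distrib_left algebra_simps)

lemma wedge_top_laplace:
  assumes "bidegree 1 1 U" "bidegree 2 2 W"
  shows "wedge U W {..<6} = (\<Sum>x<3. \<Sum>y<3. (-1) ^ (x + y) * U {x, y + 3} * W ({..<6} - {x, y + 3}))"
  unfolding wedge_def lessThan_6_eq lessThan_3_eq
  by (simp add: sum_Pow_insert shuffle_sign_insert num_less_empty num_less_insert shuffle_sign_empty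
      bidegree_coeff_eq_0[OF assms(1)] bidegree_coeff_eq_0[OF assms(2)] insert_Diff_if insert_commute)

lemma wedge_coeff22_eq_mixed_minor:
  assumes X: "bidegree 1 1 X" and Y: "bidegree 1 1 Y" and "x < 3" "y < 3"
  shows "wedge X Y ({..<6} - {x, y + 3}) =
    - mixed_minor (\<lambda>p q. X {p, q + 3}) (\<lambda>p q. Y {p, q + 3}) x y"
proof -
  have "x \<in> {0, 1, 2} \<and> y \<in> {0, 1, 2}"
    using \<open>x < 3\<close> \<open>y < 3\<close> by auto
  then show ?thesis
    unfolding wedge_def mixed_minor_def other_lo_def other_hi_def lessThan_6_eq
    by (elim conjE insertE emptyE)
      (simp_all add: sum_Pow_insert shuffle_sign_insert num_less_empty num_less_insert
        shuffle_sign_empty bidegree_coeff_eq_0[OF X] bidegree_coeff_eq_0[OF Y]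
        insert_Diff_if insert_commute)
qed

lemma wedge_top_eq_mixed_det:
  assumes U: "bidegree 1 1 U" and X: "bidegree 1 1 X" and Y: "bidegree 1 1 Y"
  shows "wedge U (wedge X Y) {..<6} = \<i> / 8 * mixed_det (hmat U) (hmat X) (hmat Y)"
proof -
  let ?coeff = "\<lambda>Z p q. Z {p, q + 3}"
  have XY: "bidegree 2 2 (wedge X Y)"
    using bidegree_wedge[OF X Y] by (simp add: numeral_2_eq_2)
  have coeff: "?coeff Z = (\<lambda>p q. \<i> / 2 * hmat Z p q)" for Z
    by (simp add: hmat_def fun_eq_iff)
  have "wedge U (wedge X Y) {..<6} = - mixed_det (?coeff U) (?coeff X) (?coeff Y)"
    unfolding wedge_top_laplace[OF U XY] mixed_det_def
    by (simp add: wedge_coeff22_eq_mixed_minor[OF X Y] sum_negf)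
  also have "\<dots> = - (\<i> / 2 * (\<i> / 2) * (\<i> / 2)) * mixed_det (hmat U) (hmat X) (hmat Y)"
    unfolding coeff mixed_det_scale by simp
  also have "- (\<i> / 2 * (\<i> / 2) * (\<i> / 2)) = (\<i> / 8 :: complex)"
    by (simp add: complex_eq_iff)
  finally show ?thesis .
qed

lemma conj_form_singleton: "conj_form f {k} = cnj (f {csw k})"
proof -
  have empty: "{(a, b). a \<in> csw ` {k} \<and> b \<in> csw ` {k} \<and> a < b \<and> csw b < csw a} = {}"
    by auto
  show ?thesis
    unfolding conj_form_def empty by simp
qed

lemma conj_form_coeff11:
  assumes "p < 3" "q < 3"
  shows "conj_form f {p, q + 3} = - cnj (f {q, p + 3})"
proof -
  have image: "csw ` {p, q + 3} = {q, p + 3}"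
    using assms by (auto simp: csw_def)
  have inversions: "{(a, b). a \<in> {q, p + 3} \<and> b \<in> {q, p + 3} \<and> a < b \<and> csw b < csw a} = {(q, p + 3)}"
    using assms by (auto simp: csw_def)
  show ?thesis
    unfolding conj_form_def image inversions by simp
qed

lemma hmat_conj_form: "p < 3 \<Longrightarrow> q < 3 \<Longrightarrow> hmat (conj_form f) p q = cnj (hmat f q p)"
  by (simp add: hmat_def conj_form_coeff11)

lemma wedge_conj_form_coeff11:
  assumes a: "bidegree 1 0 a" and b: "bidegree 1 0 b" and "p < 3" "q < 3"
  shows "wedge a (conj_form b) {p, q + 3} = a {p} * cnj (b {q})"
proof -
  have b': "bidegree 0 1 (conj_form b)"
    using bidegree_conj_form[OF b] .
  have "p \<in> {0, 1, 2}" "q \<in> {0, 1, 2}"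
    using \<open>p < 3\<close> \<open>q < 3\<close> by auto
  then show ?thesis
    unfolding wedge_def
    by (auto simp: sum_Pow_insert shuffle_sign_insert num_less_empty num_less_insert shuffle_sign_empty
        bidegree_coeff_eq_0[OF a] bidegree_coeff_eq_0[OF b'] insert_Diff_if insert_commute
        conj_form_singleton csw_def)
qed

lemma hmat_standard_kahler:
  assumes "k < 3" "p < 3" "q < 3"
  shows "hmat (form_smult (\<i> / 2) (wedge (dz k) (dzbar k))) p q = (if p = k \<and> q = k then 1 else 0)"
proof -
  have "wedge (dz k) (dzbar k) {p, q + 3} = (if p = k \<and> q = k then 1 else 0)"
    using assms unfolding wedge_def dz_def dzbar_def gen_def
    by (auto simp: sum_Pow_insert shuffle_sign_insert num_less_empty num_less_insert
        shuffle_sign_empty insert_Diff_if)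
  then show ?thesis
    by (simp add: hmat_def form_smult_def)
qed

lemma Vol_top: "Vol {..<6} = \<i> / 8"
proof -
  let ?A = "\<lambda>k. form_smult (\<i> / 2) (wedge (dz k) (dzbar k))"
  let ?E = "\<lambda>k p q. if p = k \<and> q = k then 1 else 0 :: complex"
  have A: "bidegree 1 1 (?A k)" if "k < 3" for k
    using bidegree_smult[OF bidegree_wedge[OF bidegree_dz[OF that] bidegree_dzbar[OF that]]] by simp
  have "Vol {..<6} = \<i> / 8 * mixed_det (hmat (?A 0)) (hmat (?A 1)) (hmat (?A 2))"
    unfolding Vol_def by (intro wedge_top_eq_mixed_det A) simp_all
  also have "mixed_det (hmat (?A 0)) (hmat (?A 1)) (hmat (?A 2)) = mixed_det (?E 0) (?E 1) (?E 2)"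
    by (rule mixed_det_cong) (simp_all add: hmat_standard_kahler)
  also have "mixed_det (?E 0) (?E 1) (?E 2) = 1"
    unfolding mixed_det_def mixed_minor_def other_lo_def other_hi_def lessThan_3_eq by simp
  finally show ?thesis
    by simp
qed

lemma star_wedge_eq_mixed_det:
  assumes "bidegree 1 1 U" "bidegree 1 1 X" "bidegree 1 1 Y"
  shows "star (wedge U (wedge X Y)) = mixed_det (hmat U) (hmat X) (hmat Y)"
  unfolding star_def Vol_top wedge_top_eq_mixed_det[OF assms] by simp

lemma wedge_form_diff: "wedge f (form_diff g h) = form_diff (wedge f g) (wedge f h)"
  unfolding wedge_def form_diff_def by (simp add: algebra_simps sum_subtractf)

lemma star_form_diff: "star (form_diff f g) = star f - star g"
  unfolding star_def form_diff_def by (simp add: diff_divide_distrib)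

lemma hermQ_det2_eq_mixed_det:
  assumes a: "bidegree 1 0 a" and M: "\<And>i j. i < 2 \<Longrightarrow> j < 2 \<Longrightarrow> bidegree 1 1 (M i j)"
  defines "A \<equiv> \<lambda>p q. a {p} * cnj (a {q})"
  shows "hermQ (det2 M) a a =
    2 * (mixed_det A (hmat (M 0 0)) (hmat (M 1 1)) - mixed_det A (hmat (M 0 1)) (hmat (M 1 0)))"
proof -
  let ?U = "wedge a (conj_form a)"
  have U: "bidegree 1 1 ?U"
    using bidegree_wedge[OF a bidegree_conj_form[OF a]] by simp
  have hmat_U: "mixed_det (hmat ?U) X Y = -2 * \<i> * mixed_det A X Y" for X Y
  proof -
    have "mixed_det (hmat ?U) X Y = mixed_det (\<lambda>p q. -2 * \<i> * A p q) (\<lambda>p q. 1 * X p q) (\<lambda>p q. 1 * Y p q)"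
      by (rule mixed_det_cong) (simp_all add: hmat_def A_def wedge_conj_form_coeff11[OF a a])
    then show ?thesis
      by (simp only: mixed_det_scale) simp
  qed
  have "hermQ (det2 M) a a =
      \<i> * (star (wedge ?U (wedge (M 0 0) (M 1 1))) - star (wedge ?U (wedge (M 0 1) (M 1 0))))"
    unfolding hermQ_def det2_def wedge_form_diff star_form_diff ..
  also have "\<dots> = \<i> * (mixed_det (hmat ?U) (hmat (M 0 0)) (hmat (M 1 1))
      - mixed_det (hmat ?U) (hmat (M 0 1)) (hmat (M 1 0)))"
    using star_wedge_eq_mixed_det[OF U M M] by simp
  also have "\<dots> = \<i> * (-2 * \<i>) * (mixed_det A (hmat (M 0 0)) (hmat (M 1 1))
      - mixed_det A (hmat (M 0 1)) (hmat (M 1 0)))"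
    unfolding hmat_U by (simp add: algebra_simps)
  also have "\<i> * (-2 * \<i>) = (2 :: complex)"
    by (simp add: complex_eq_iff)
  finally show ?thesis .
qed

section \<open>Linear algebra on C^3\<close>

definition cross :: "(nat \<Rightarrow> complex) \<Rightarrow> (nat \<Rightarrow> complex) \<Rightarrow> nat \<Rightarrow> complex" where
  "cross u v k =
    (if k = 0 then u 1 * v 2 - u 2 * v 1
     else if k = 1 then u 2 * v 0 - u 0 * v 2
     else u 0 * v 1 - u 1 * v 0)"

definition sesq :: "(nat \<Rightarrow> nat \<Rightarrow> complex) \<Rightarrow> (nat \<Rightarrow> complex) \<Rightarrow> (nat \<Rightarrow> complex) \<Rightarrow> complex" where
  "sesq H u w = (\<Sum>p<3. \<Sum>q<3. u p * H p q * cnj (w q))"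

lemma all_less_3_iff: "(\<forall>k<3. P k) \<longleftrightarrow> P 0 \<and> P 1 \<and> P (2::nat)"
proof -
  have "k < 3 \<longleftrightarrow> k = 0 \<or> k = 1 \<or> k = 2" for k :: nat
    by auto
  then show ?thesis
    by auto
qed

lemma ex_less_3_iff: "(\<exists>k<3. P k) \<longleftrightarrow> P 0 \<or> P 1 \<or> P (2::nat)"
  using all_less_3_iff[of "\<lambda>k. \<not> P k"] by blast

lemma cross_surj: "\<exists>u v. \<forall>k<3. cross u v k = a k"
proof (cases "a 0 = 0")
  case True
  let ?u = "\<lambda>k. if k = 0 then 0 else if k = 1 then - a 2 else a 1"
  let ?v = "\<lambda>k. if k = 0 then 1 else 0"
  have "\<forall>k<3. cross ?u ?v k = a k"
    using True by (simp add: all_less_3_iff cross_def)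
  then show ?thesis
    by blast
next
  case False
  let ?u = "\<lambda>k. if k = 0 then - a 1 else if k = 1 then a 0 else 0"
  let ?v = "\<lambda>k. if k = 0 then - a 2 / a 0 else if k = 1 then 0 else 1"
  have "\<forall>k<3. cross ?u ?v k = a k"
    using False by (simp add: all_less_3_iff cross_def)
  then show ?thesis
    by blast
qed

lemma cross_nonzero_imp_nonzero:
  assumes "\<exists>k<3. cross u v k \<noteq> 0"
  shows "\<exists>p<3. u p \<noteq> 0" and "\<exists>p<3. v p \<noteq> 0"
  using assms unfolding ex_less_3_iff by (auto simp: cross_def)

lemma cross_diff_multiple: "cross u (\<lambda>q. v q - c * u q) = cross u v"
  by (simp add: cross_def fun_eq_iff algebra_simps)

lemma sesq_diff_multiple: "sesq H u (\<lambda>q. v q - c * u q) = sesq H u v - cnj c * sesq H u u"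
  unfolding sesq_def lessThan_3_eq by (simp add: algebra_simps)

lemma sesq_conj_transpose:
  assumes "\<And>p q. p < 3 \<Longrightarrow> q < 3 \<Longrightarrow> Y p q = cnj (X q p)"
  shows "sesq Y a b = cnj (sesq X b a)"
proof -
  have "cnj (sesq X b a) = (\<Sum>p<3. \<Sum>q<3. cnj (b p) * Y q p * a q)"
    unfolding sesq_def using assms by simp
  also have "\<dots> = (\<Sum>q<3. \<Sum>p<3. cnj (b p) * Y q p * a q)"
    by (rule sum.swap)
  also have "\<dots> = sesq Y a b"
    unfolding sesq_def by (intro sum.cong refl) (simp add: algebra_simps)
  finally show ?thesis
    by simp
qed

lemma sesq_gram:
  fixes W :: "nat \<Rightarrow> nat \<Rightarrow> complex"
  shows "sesq (\<lambda>p q. \<Sum>l<3. W l p * cnj (W l q)) x x =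
    (\<Sum>l<3. (\<Sum>p<3. x p * W l p) * cnj (\<Sum>p<3. x p * W l p))"
  unfolding sesq_def lessThan_3_eq by (simp add: algebra_simps)

(* The entries of u x v are the 2x2 minors of the 3x2 matrix [u v], so by Cauchy-Binet only
   the restrictions of X and Y to span {u, v} enter. *)
lemma mixed_det_cross:
  "mixed_det (\<lambda>x y. cross u v x * cnj (cross u v y)) X Y =
    sesq X u u * sesq Y v v + sesq X v v * sesq Y u u
    - sesq X u v * sesq Y v u - sesq X v u * sesq Y u v"
  unfolding mixed_det_def mixed_minor_def other_lo_def other_hi_def lessThan_3_eq
    cross_def sesq_def
  by (simp add: algebra_simps)

lemma left_null_vector_if_right_null_vector:
  fixes W :: "nat \<Rightarrow> nat \<Rightarrow> 'a::field"
  assumes "\<forall>l<n. (\<Sum>p<n. W l p * x p) = 0" and "\<exists>p<n. x p \<noteq> 0"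
  shows "\<exists>c. (\<forall>p<n. (\<Sum>l<n. c l * W l p) = 0) \<and> (\<exists>l<n. c l \<noteq> 0)"
proof -
  define A where "A = mat n n (\<lambda>(l, p). W l p)"
  have A: "A \<in> carrier_mat n n" "transpose_mat A \<in> carrier_mat n n"
    unfolding A_def by auto
  have "A *\<^sub>v vec n x = 0\<^sub>v n"
    using assms(1) by (auto simp: A_def scalar_prod_def atLeast0LessThan)
  moreover have "vec n x \<noteq> 0\<^sub>v n"
    using assms(2) by (metis index_vec index_zero_vec(1))
  ultimately have "det A = 0"
    using det_0_iff_vec_prod_zero_field[OF A(1)] vec_carrier by blast
  then obtain c where c: "c \<in> carrier_vec n" "c \<noteq> 0\<^sub>v n" "transpose_mat A *\<^sub>v c = 0\<^sub>v n"
    using det_0_iff_vec_prod_zero_field[OF A(2)] det_transpose[OF A(1)] by auto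
  have "\<forall>p<n. (\<Sum>l<n. c $ l * W l p) = 0"
  proof (intro allI impI)
    fix p assume "p < n"
    then have "(transpose_mat A *\<^sub>v c) $ p = 0"
      using c(3) by simp
    then show "(\<Sum>l<n. c $ l * W l p) = 0"
      using \<open>p < n\<close> c(1) by (simp add: A_def scalar_prod_def atLeast0LessThan mult.commute)
  qed
  moreover have "\<exists>l<n. c $ l \<noteq> 0"
    using c(1,2) by (metis eq_vecI index_zero_vec carrier_vecD)
  ultimately show ?thesis
    by blast
qed

lemma is_pq_1_0_support:
  assumes "is_pq 1 0 f" "f S \<noteq> 0"
  shows "\<exists>p<3. S = {p}"
proof -
  from assms have S: "S \<subseteq> {..<6}" "card (S \<inter> {..<3}) = 1" "card (S \<inter> {3..<6}) = 0"
    unfolding is_pq_def by auto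
  have "finite S"
    by (rule finite_subset[OF S(1)]) simp
  then have empty: "S \<inter> {3..<6} = {}"
    using S(3) by simp
  have "x < 3" if "x \<in> S" for x
  proof (rule ccontr)
    assume "\<not> x < 3"
    with that S(1) have "x \<in> S \<inter> {3..<6}"
      by auto
    with empty show False
      by blast
  qed
  then have "S = S \<inter> {..<3}"
    by auto
  moreover obtain p where "S \<inter> {..<3} = {p}"
    using S(2) by (rule card_1_singletonE)
  ultimately show ?thesis
    by auto
qed

lemma independent_1_0_forms_coeff_inj:
  assumes w: "\<forall>l<3. is_pq 1 0 (w l)"
    and indep: "\<forall>c. form_sum (\<lambda>l. form_smult (c l) (w l)) {..<3} = form_zero \<longrightarrow> (\<forall>l<3. c l = 0)"
    and wx: "\<forall>l<3. (\<Sum>p<3. w l {p} * x p) = 0"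
  shows "\<forall>p<3. x p = 0"
proof (rule ccontr)
  assume "\<not> (\<forall>p<3. x p = 0)"
  then obtain c where c: "\<forall>p<3. (\<Sum>l<3. c l * w l {p}) = 0" "\<exists>l<3. c l \<noteq> 0"
    using left_null_vector_if_right_null_vector[of 3 "\<lambda>l p. w l {p}", OF wx] by blast
  have "form_sum (\<lambda>l. form_smult (c l) (w l)) {..<3} S = 0" for S
  proof (cases "\<exists>p<3. S = {p}")
    case True
    then show ?thesis
      using c(1) unfolding form_sum_def form_smult_def by auto
  next
    case False
    then have "w l S = 0" if "l < 3" for l
      using is_pq_1_0_support w that by blast
    then show ?thesis
      unfolding form_sum_def form_smult_def by simp
  qed
  then have "form_sum (\<lambda>l. form_smult (c l) (w l)) {..<3} = form_zero"
    unfolding form_zero_def by (simp add: fun_eq_iff)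
  then show False
    using indep c(2) by blast
qed

lemma kahler_hmat_gram:
  assumes "kahler K"
  obtains W :: "nat \<Rightarrow> nat \<Rightarrow> complex"
  where "\<And>p q. p < 3 \<Longrightarrow> q < 3 \<Longrightarrow> hmat K p q = (\<Sum>l<3. W l p * cnj (W l q))"
    and "\<And>x. \<forall>l<3. (\<Sum>p<3. W l p * x p) = 0 \<Longrightarrow> \<forall>p<3. x p = 0"
proof -
  obtain w where w: "\<forall>l<3. is_pq 1 0 (w l)"
    and indep: "\<forall>c. form_sum (\<lambda>l. form_smult (c l) (w l)) {..<3} = form_zero \<longrightarrow> (\<forall>l<3. c l = 0)"
    and K: "K = form_sum (\<lambda>l. form_smult (\<i> / 2) (wedge (w l) (conj_form (w l)))) {..<3}"
    using assms unfolding kahler_def by blast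
  have "hmat K p q = (\<Sum>l<3. w l {p} * cnj (w l {q}))" if "p < 3" "q < 3" for p q
  proof -
    have "hmat K p q = (\<Sum>l<3. -2 * \<i> * (\<i> / 2) * wedge (w l) (conj_form (w l)) {p, q + 3})"
      unfolding K hmat_def form_sum_def form_smult_def by (simp add: sum_distrib_left mult.assoc)
    also have "\<dots> = (\<Sum>l<3. w l {p} * cnj (w l {q}))"
    proof (rule sum.cong)
      fix l :: nat assume "l \<in> {..<3}"
      then have "bidegree 1 0 (w l)"
        using w by (simp add: is_pq_imp_bidegree)
      moreover have "-2 * \<i> * (\<i> / 2) = (1 :: complex)"
        by (simp add: complex_eq_iff)
      ultimately show "-2 * \<i> * (\<i> / 2) * wedge (w l) (conj_form (w l)) {p, q + 3}
          = w l {p} * cnj (w l {q})"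
        using that by (simp add: wedge_conj_form_coeff11)
    qed simp
    finally show ?thesis .
  qed
  moreover have "\<forall>p<3. x p = 0" if "\<forall>l<3. (\<Sum>p<3. w l {p} * x p) = 0" for x
    using w indep that by (rule independent_1_0_forms_coeff_inj)
  ultimately show ?thesis
    using that[of "\<lambda>l p. w l {p}"] by blast
qed

lemma kahler_sesq_pos:
  assumes "kahler K" and "\<exists>p<3. x p \<noteq> 0"
  shows "0 < Re (sesq (hmat K) x x)"
proof -
  obtain W :: "nat \<Rightarrow> nat \<Rightarrow> complex"
    where gram: "\<And>p q. p < 3 \<Longrightarrow> q < 3 \<Longrightarrow> hmat K p q = (\<Sum>l<3. W l p * cnj (W l q))"
    and inj: "\<And>x. \<forall>l<3. (\<Sum>p<3. W l p * x p) = 0 \<Longrightarrow> \<forall>p<3. x p = 0"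
    using kahler_hmat_gram[OF assms(1)] by blast
  define y where "y l = (\<Sum>p<3. x p * W l p)" for l
  have "sesq (hmat K) x x = sesq (\<lambda>p q. \<Sum>l<3. W l p * cnj (W l q)) x x"
    unfolding sesq_def by (intro sum.cong refl) (simp add: gram)
  also have "\<dots> = (\<Sum>l<3. complex_of_real (cmod (y l) ^ 2))"
    unfolding sesq_gram y_def by (simp only: complex_norm_square)
  finally have Re_sesq: "Re (sesq (hmat K) x x) = (\<Sum>l<3. cmod (y l) ^ 2)"
    by (simp add: Re_sum)
  have "\<not> (\<forall>l<3. y l = 0)"
  proof
    assume "\<forall>l<3. y l = 0"
    then have "\<forall>l<3. (\<Sum>p<3. W l p * x p) = 0"
      unfolding y_def by (simp add: mult.commute)
    then show False
      using inj assms(2) by blast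
  qed
  then obtain l where "l < 3" "y l \<noteq> 0"
    by blast
  then have "0 < (\<Sum>l<3. cmod (y l) ^ 2)"
    by (intro sum_pos2[of _ l]) simp_all
  then show ?thesis
    unfolding Re_sesq .
qed

section \<open>Positivity\<close>

lemma pos_definite_2x2D:
  fixes a b c :: complex
  assumes "Im a = 0" "Im b = 0"
    and pos: "\<And>t0 t1. t0 \<noteq> 0 \<or> t1 \<noteq> 0 \<Longrightarrow>
      0 < Re (t0 * cnj t0 * a + t1 * cnj t1 * b + t0 * cnj t1 * c + t1 * cnj t0 * cnj c)"
  shows "0 < Re a" "0 < Re b" "cmod c ^ 2 < Re a * Re b"
proof -
  show "0 < Re a"
    using pos[of 1 0] by simp
  show b: "0 < Re b"
    using pos[of 0 1] by simp
  have a: "a = of_real (Re a)" and b': "b = of_real (Re b)"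
    using assms(1,2) by (simp_all add: complex_eq_iff)
  \<comment> \<open>evaluate the form at \<open>(Re b, -c)\<close>\<close>
  have "Re (of_real (Re b) * cnj (of_real (Re b)) * a + (- c) * cnj (- c) * b
      + of_real (Re b) * cnj (- c) * c + (- c) * cnj (of_real (Re b)) * cnj c)
      = Re b * (Re a * Re b - cmod c ^ 2)"
    by (subst (1 2) a, subst (1 2) b')
      (use cmod_power2[of c] in \<open>simp add: power2_eq_square algebra_simps\<close>)
  moreover have "0 < Re (of_real (Re b) * cnj (of_real (Re b)) * a + (- c) * cnj (- c) * b
      + of_real (Re b) * cnj (- c) * c + (- c) * cnj (of_real (Re b)) * cnj c)"
    by (rule pos) (use b in simp)
  ultimately show "cmod c ^ 2 < Re a * Re b"
    using b by (simp add: zero_less_mult_iff)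
qed

lemma two_Re_mult_cnj_less:
  fixes A0 B0 A1 B1 :: real and c0 c1 :: complex
  assumes "0 < A0" "0 < B0" "0 < A1" "0 < B1" "cmod c0 ^ 2 < A0 * B0" "cmod c1 ^ 2 < A1 * B1"
  shows "2 * Re (c0 * cnj c1) < A0 * B1 + A1 * B0"
proof -
  have "cmod c0 ^ 2 * cmod c1 ^ 2 < (A0 * B0) * (A1 * B1)"
    by (rule mult_strict_mono) (use assms in auto)
  then have "(cmod c0 * cmod c1) ^ 2 < (A0 * B1) * (A1 * B0)"
    by (simp add: power_mult_distrib algebra_simps)
  also have "\<dots> \<le> ((A0 * B1 + A1 * B0) / 2) ^ 2"
    using sum_squares_ge_zero[of "A0 * B1 - A1 * B0" 0]
    by (simp add: power2_eq_square field_simps)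
  finally have "cmod c0 * cmod c1 < (A0 * B1 + A1 * B0) / 2"
    by (rule power2_less_imp_less) (use assms in simp)
  then have "2 * (cmod c0 * cmod c1) < A0 * B1 + A1 * B0"
    by simp
  moreover have "Re (c0 * cnj c1) \<le> cmod c0 * cmod c1"
    using complex_Re_le_cmod[of "c0 * cnj c1"] by (simp add: norm_mult)
  ultimately show ?thesis
    by linarith
qed

lemma mixed_discriminant_pos:
  fixes a a' b b' c c' d d' :: complex
  assumes "Im a = 0" "Im a' = 0" "Im b = 0" "Im b' = 0"
    and "0 < Re a" "0 < Re b" "0 < Re a'" "0 < Re b'"
    and "cmod c ^ 2 < Re a * Re b" "cmod c' ^ 2 < Re a' * Re b'"
  defines "D \<equiv> a * b' + a' * b - (c * cnj c' + c' * cnj c - d * cnj d - d' * cnj d')"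
  shows "Im D = 0" "0 < Re D"
proof -
  show "Im D = 0"
    using assms(1-4) unfolding D_def by (simp add: algebra_simps)
  have norm_sq: "cmod z ^ 2 = Re z * Re z + Im z * Im z" for z
    using cmod_power2[of z] by (simp only: power2_eq_square)
  have "Re D = Re a * Re b' + Re a' * Re b - 2 * Re (c * cnj c') + cmod d ^ 2 + cmod d' ^ 2"
    using assms(1-4) unfolding D_def norm_sq by (simp add: algebra_simps)
  moreover have "2 * Re (c * cnj c') < Re a * Re b' + Re a' * Re b"
    using assms(5-10) by (rule two_Re_mult_cnj_less)
  ultimately show "0 < Re D"
    by (simp add: add_pos_nonneg)
qed

lemma sesq_pencil:
  fixes H :: "nat \<Rightarrow> nat \<Rightarrow> nat \<Rightarrow> nat \<Rightarrow> complex"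
  shows "sesq (\<lambda>p q. \<Sum>i<2. \<Sum>j<2. \<theta> i * cnj (\<theta> j) * H i j p q) w w =
    \<theta> 0 * cnj (\<theta> 0) * sesq (H 0 0) w w + \<theta> 1 * cnj (\<theta> 1) * sesq (H 1 1) w w
    + \<theta> 0 * cnj (\<theta> 1) * sesq (H 0 1) w w + \<theta> 1 * cnj (\<theta> 0) * sesq (H 1 0) w w"
proof -
  have "{..<2::nat} = {0, 1}"
    by auto
  then show ?thesis
    unfolding sesq_def lessThan_3_eq by (simp add: algebra_simps)
qed

locale griffiths_positive_block =
  fixes h :: "nat \<Rightarrow> nat \<Rightarrow> nat \<Rightarrow> nat \<Rightarrow> complex"
  assumes hermitian: "\<And>i j p q. i < 2 \<Longrightarrow> j < 2 \<Longrightarrow> p < 3 \<Longrightarrow> q < 3 \<Longrightarrow> h i j p q = cnj (h j i q p)"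
    and positive: "\<And>\<theta> x. \<theta> 0 \<noteq> 0 \<or> \<theta> 1 \<noteq> 0 \<Longrightarrow> \<exists>p<3. x p \<noteq> 0 \<Longrightarrow>
      0 < Re (sesq (\<lambda>p q. \<Sum>i<2. \<Sum>j<2. \<theta> i * cnj (\<theta> j) * h i j p q) x x)"
begin

lemma sesq_swap:
  assumes "i < 2" "j < 2"
  shows "sesq (h i j) u w = cnj (sesq (h j i) w u)"
  using assms by (intro sesq_conj_transpose hermitian)

lemma sesq_diagonal_real:
  assumes "i < 2"
  shows "Im (sesq (h i i) w w) = 0"
proof -
  have "sesq (h i i) w w = cnj (sesq (h i i) w w)"
    using sesq_swap[OF assms assms] .
  then have "Im (sesq (h i i) w w) = - Im (sesq (h i i) w w)"
    by (metis cnj.sel(2))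
  then show ?thesis
    by simp
qed

lemma sesq_block_pos:
  assumes "\<exists>p<3. w p \<noteq> 0"
  shows "0 < Re (sesq (h 0 0) w w)" "0 < Re (sesq (h 1 1) w w)"
    "cmod (sesq (h 0 1) w w) ^ 2 < Re (sesq (h 0 0) w w) * Re (sesq (h 1 1) w w)"
proof -
  have pencil: "0 < Re (t0 * cnj t0 * sesq (h 0 0) w w + t1 * cnj t1 * sesq (h 1 1) w w
      + t0 * cnj t1 * sesq (h 0 1) w w + t1 * cnj t0 * cnj (sesq (h 0 1) w w))"
    if "t0 \<noteq> 0 \<or> t1 \<noteq> 0" for t0 t1
  proof -
    have "0 < Re (sesq (\<lambda>p q. \<Sum>i<2. \<Sum>j<2.
        (if i = 0 then t0 else t1) * cnj (if j = 0 then t0 else t1) * h i j p q) w w)"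
      by (rule positive) (use that assms in simp_all)
    moreover have "sesq (h 1 0) w w = cnj (sesq (h 0 1) w w)"
      by (rule sesq_swap) simp_all
    ultimately show ?thesis
      unfolding sesq_pencil by simp
  qed
  have "Im (sesq (h 0 0) w w) = 0" "Im (sesq (h 1 1) w w) = 0"
    by (simp_all add: sesq_diagonal_real)
  from pos_definite_2x2D[OF this pencil]
  show "0 < Re (sesq (h 0 0) w w)" "0 < Re (sesq (h 1 1) w w)"
    "cmod (sesq (h 0 1) w w) ^ 2 < Re (sesq (h 0 0) w w) * Re (sesq (h 1 1) w w)"
    by simp_all
qed

lemma cross_orthogonal_factors:
  assumes "\<exists>p<3. a p \<noteq> 0"
  obtains u v where "\<forall>k<3. cross u v k = a k" "\<exists>p<3. u p \<noteq> 0" "\<exists>p<3. v p \<noteq> 0"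
    "sesq (h 0 0) u v = 0" "sesq (h 0 0) v u = 0"
proof -
  obtain u v0 where uv0: "\<forall>k<3. cross u v0 k = a k"
    using cross_surj by blast
  have "\<exists>k<3. cross u v0 k \<noteq> 0"
    using uv0 assms by auto
  then have u: "\<exists>p<3. u p \<noteq> 0"
    by (rule cross_nonzero_imp_nonzero(1))
  have "sesq (h 0 0) u u \<noteq> 0"
    using sesq_block_pos(1)[OF u] by auto
  \<comment> \<open>Gram--Schmidt for \<open>h 0 0\<close>; this does not change \<open>u \<times> v\<close>\<close>
  define v where "v = (\<lambda>q. v0 q - cnj (sesq (h 0 0) u v0 / sesq (h 0 0) u u) * u q)"
  have uv: "\<forall>k<3. cross u v k = a k"
    unfolding v_def cross_diff_multiple by (fact uv0)
  have "\<exists>k<3. cross u v k \<noteq> 0"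
    using uv assms by auto
  then have v: "\<exists>p<3. v p \<noteq> 0"
    by (rule cross_nonzero_imp_nonzero(2))
  have orth: "sesq (h 0 0) u v = 0"
    unfolding v_def sesq_diff_multiple using \<open>sesq (h 0 0) u u \<noteq> 0\<close> by simp
  then have "sesq (h 0 0) v u = 0"
    using sesq_swap[of 0 0 v u] by simp
  with uv u v orth show ?thesis
    using that by blast
qed

lemma mixed_det_pos:
  assumes "\<exists>p<3. a p \<noteq> 0"
  defines "A \<equiv> \<lambda>p q. a p * cnj (a q)"
  shows "Im (mixed_det A (h 0 0) (h 1 1) - mixed_det A (h 0 1) (h 1 0)) = 0 \<and>
    0 < Re (mixed_det A (h 0 0) (h 1 1) - mixed_det A (h 0 1) (h 1 0))"
proof -
  obtain u v where uv: "\<forall>k<3. cross u v k = a k" and u: "\<exists>p<3. u p \<noteq> 0" and v: "\<exists>p<3. v p \<noteq> 0"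
    and orth: "sesq (h 0 0) u v = 0" "sesq (h 0 0) v u = 0"
    using assms(1) by (rule cross_orthogonal_factors)
  have swap: "sesq (h 1 0) x y = cnj (sesq (h 0 1) y x)" for x y
    by (rule sesq_swap) simp_all
  have A_cross: "mixed_det A X Y = mixed_det (\<lambda>x y. cross u v x * cnj (cross u v y)) X Y" for X Y
    unfolding A_def by (rule mixed_det_cong) (simp_all add: uv)
  have D: "mixed_det A (h 0 0) (h 1 1) - mixed_det A (h 0 1) (h 1 0) =
      sesq (h 0 0) u u * sesq (h 1 1) v v + sesq (h 0 0) v v * sesq (h 1 1) u u
      - (sesq (h 0 1) u u * cnj (sesq (h 0 1) v v) + sesq (h 0 1) v v * cnj (sesq (h 0 1) u u)
         - sesq (h 0 1) u v * cnj (sesq (h 0 1) u v) - sesq (h 0 1) v u * cnj (sesq (h 0 1) v u))"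
    unfolding A_cross mixed_det_cross orth swap by simp
  have real: "Im (sesq (h 0 0) x x) = 0" "Im (sesq (h 1 1) x x) = 0" for x
    by (simp_all add: sesq_diagonal_real)
  note block_u = sesq_block_pos[OF u] and block_v = sesq_block_pos[OF v]
  show ?thesis
    unfolding D
    using mixed_discriminant_pos[where d = "sesq (h 0 1) u v" and d' = "sesq (h 0 1) v u",
        OF real(1)[of u] real(1)[of v] real(2)[of u] real(2)[of v]
        block_u(1,2) block_v(1,2) block_u(3) block_v(3)]
    by (rule conjI)
qed

end

lemma griffiths_positive_block_hmat:
  assumes "griffiths_positive M"
  shows "griffiths_positive_block (\<lambda>i j. hmat (M i j))"
proof unfold_locales
  fix i j p q :: nat
  assume "i < 2" "j < 2" "p < 3" "q < 3"
  moreover have "M i j = conj_form (M j i)"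
    using assms \<open>i < 2\<close> \<open>j < 2\<close> unfolding griffiths_positive_def by blast
  ultimately show "hmat (M i j) p q = cnj (hmat (M j i) q p)"
    by (simp add: hmat_conj_form)
next
  fix \<theta> x :: "nat \<Rightarrow> complex"
  assume \<theta>: "\<theta> 0 \<noteq> 0 \<or> \<theta> 1 \<noteq> 0" and x: "\<exists>p<3. x p \<noteq> 0"
  let ?K = "form_sum (\<lambda>i. form_sum (\<lambda>j. form_smult (\<theta> i * cnj (\<theta> j)) (M i j)) {..<2}) {..<2}"
  have "kahler ?K"
    using assms \<theta> unfolding griffiths_positive_def by blast
  then have "0 < Re (sesq (hmat ?K) x x)"
    using x by (rule kahler_sesq_pos)
  moreover have "hmat ?K = (\<lambda>p q. \<Sum>i<2. \<Sum>j<2. \<theta> i * cnj (\<theta> j) * hmat (M i j) p q)"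
    unfolding hmat_def form_sum_def form_smult_def
    by (simp add: fun_eq_iff sum_distrib_left algebra_simps)
  ultimately show "0 < Re (sesq (\<lambda>p q. \<Sum>i<2. \<Sum>j<2. \<theta> i * cnj (\<theta> j) * hmat (M i j) p q) x x)"
    by simp
qed

theorem mainTheorem7:
  fixes M :: "nat \<Rightarrow> nat \<Rightarrow> form"
  assumes "\<forall>i<2. \<forall>j<2. is_pq 1 1 (M i j)"
    and "griffiths_positive M"
  shows "\<forall>a. is_pq 1 0 a \<and> a \<noteq> form_zero \<longrightarrow>
           Im (hermQ (det2 M) a a) = 0 \<and> Re (hermQ (det2 M) a a) > 0"
proof (intro allI impI)
  fix a assume "is_pq 1 0 a \<and> a \<noteq> form_zero"
  then have a: "is_pq 1 0 a" "a \<noteq> form_zero"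
    by auto
  interpret griffiths_positive_block "\<lambda>i j. hmat (M i j)"
    using assms(2) by (rule griffiths_positive_block_hmat)
  obtain S where "a S \<noteq> 0"
    using a(2) unfolding form_zero_def by auto
  then have "\<exists>p<3. a {p} \<noteq> 0"
    using is_pq_1_0_support[OF a(1)] by blast
  note pos = mixed_det_pos[OF this]
  have Q: "hermQ (det2 M) a a =
      2 * (mixed_det (\<lambda>p q. a {p} * cnj (a {q})) (hmat (M 0 0)) (hmat (M 1 1))
         - mixed_det (\<lambda>p q. a {p} * cnj (a {q})) (hmat (M 0 1)) (hmat (M 1 0)))"
    using assms(1) a(1) by (intro hermQ_det2_eq_mixed_det) (simp_all add: is_pq_imp_bidegree)
  have double: "Im (2 * z) = 0 \<and> 0 < Re (2 * z)" if "Im z = 0 \<and> 0 < Re z" for z :: complex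
    using that by simp
  show "Im (hermQ (det2 M) a a) = 0 \<and> Re (hermQ (det2 M) a a) > 0"
    unfolding Q by (rule double[OF pos])
qed

end
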